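(* Let $n\ge 2$, $m=qn$ with $q$ a positive integer, $m\ge 2n$ and $\frac{n\log m}{m^{1-1/n}}\le\frac1{16}$. Let $\pi_1,\dots,\pi_n$ be independent uniformly random orderings of the items, run Round-Robin, and fix an agent $i$. Let $L$ be the set of the $\lceil 3n\log m\rceil+(n-1)$ items ranked lowest in $\pi_i$. Then $$\Pr[b_{iq}\in L]\le 2\left(\frac{8n\log m}{m^{1-1/n}}\right)^{n+1-i}.$$
   Context: Logarithms are natural. Round-Robin: agents take turns in order $1,\dots,n,1,\dots,n,\dots$; on her turn agent $i$ takes the unallocated item ranked highest in $\pi_i$, until all items are allocated, giving bundles $A_1,\dots,A_n$ of size $q$. $b_{iq}$ denotes the worst item (according to $\pi_i$) in agent $i$'s bundle $A_i$, i.e. the last item agent $i$ picks. *)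

theory Defs
  imports "HOL-Probability.Probability" "HOL-Combinatorics.Multiset_Permutations"
begin

text \<open>Items are 0..<m; agents are 1..n. A preference ordering of agent a is a list
  (a permutation of the items), the head being the most preferred item.\<close>

fun rr_remaining :: "(nat \<Rightarrow> nat list) \<Rightarrow> nat \<Rightarrow> nat \<Rightarrow> nat \<Rightarrow> nat set" where
  "rr_remaining P n m 0 = {0..<m}"
| "rr_remaining P n m (Suc k) =
     (let R = rr_remaining P n m k
      in R - {hd (filter (\<lambda>x. x \<in> R) (P (k mod n + 1)))})"

definition rr_pick :: "(nat \<Rightarrow> nat list) \<Rightarrow> nat \<Rightarrow> nat \<Rightarrow> nat \<Rightarrow> nat" where
  "rr_pick P n m k = hd (filter (\<lambda>x. x \<in> rr_remaining P n m k) (P (k mod n + 1)))"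

definition rr_bundle :: "(nat \<Rightarrow> nat list) \<Rightarrow> nat \<Rightarrow> nat \<Rightarrow> nat \<Rightarrow> nat set" where
  "rr_bundle P n m i = {rr_pick P n m k | k. k < m \<and> k mod n + 1 = i}"

definition rank :: "nat list \<Rightarrow> nat \<Rightarrow> nat" where
  "rank l x = (LEAST j. j < length l \<and> l ! j = x)"

definition rr_worst :: "(nat \<Rightarrow> nat list) \<Rightarrow> nat \<Rightarrow> nat \<Rightarrow> nat \<Rightarrow> nat" where
  "rr_worst P n m i = (ARG_MAX (rank (P i)) x. x \<in> rr_bundle P n m i)"

definition lowest :: "nat list \<Rightarrow> nat \<Rightarrow> nat set" where
  "lowest l s = set (drop (length l - s) l)"

definition profiles :: "nat \<Rightarrow> nat \<Rightarrow> (nat \<Rightarrow> nat list) set" where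
  "profiles n m = PiE {1..n} (\<lambda>_. permutations_of_set {0..<m})"

end

theory Submission
  imports Defs "HOL-Analysis.Harmonic_Numbers"
begin

text \<open>Fix the orderings of all agents other than \<open>i\<close>. Between two consecutive turns of \<open>i\<close>
  the other \<open>n - 1\<close> agents always move in the same order, so they act on the set of remaining
  items by one fixed map \<open>F\<close>. Agent \<open>i\<close>'s picks are then found by scanning her ordering
  greedily, and her worst item is among her \<open>s\<close> lowest iff fewer than \<open>s\<close> entries follow her
  last pick. Classifying orderings of \<open>u\<close> items by their first entry (skipped if already taken,
  picked otherwise) shows by induction on \<open>u\<close> that, when \<open>a + k n\<close> items are available, at most
  a fraction \<open>C(s,a) / C(u,a) * prod (1 + a / (j n)) (j = 1..k)\<close> of them are bad; here
  \<open>a = n + 1 - i\<close> and \<open>k = q - 1\<close>. Finally \<open>C(s,a) / C(m,a) \<le> (s / m) ^ a\<close>, and the product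
  is at most \<open>(e k) powr (a / n) \<le> (2 m powr (1 / n)) ^ a\<close>.\<close>

section \<open>Greedy scans of an ordering\<close>

definition first_in :: "'a list \<Rightarrow> 'a set \<Rightarrow> 'a" where
  "first_in l Y = hd (filter (\<lambda>x. x \<in> Y) l)"

lemma first_in_mem:
  assumes "Y \<inter> set l \<noteq> {}"
  shows "first_in l Y \<in> set l \<inter> Y"
proof -
  have "filter (\<lambda>x. x \<in> Y) l \<noteq> []"
    using assms by (auto simp: filter_empty_conv)
  then have "first_in l Y \<in> set (filter (\<lambda>x. x \<in> Y) l)"
    unfolding first_in_def by (rule hd_in_set)
  then show ?thesis
    by auto
qed

lemma split_first_in:
  assumes "Y \<inter> set l \<noteq> {}"
  obtains us vs where "l = us @ first_in l Y # vs" "set us \<inter> Y = {}" "first_in l Y \<in> Y"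
proof -
  have "filter (\<lambda>x. x \<in> Y) l \<noteq> []"
    using assms by (auto simp: filter_empty_conv)
  then have "filter (\<lambda>x. x \<in> Y) l = first_in l Y # tl (filter (\<lambda>x. x \<in> Y) l)"
    by (simp add: first_in_def)
  then show ?thesis
    using that by (auto simp: filter_eq_Cons_iff)
qed

lemma rank_nth: "distinct l \<Longrightarrow> j < length l \<Longrightarrow> rank l (l ! j) = j"
  unfolding rank_def by (rule Least_equality) (auto simp: nth_eq_iff_index_eq)

lemma rank_append_Cons: "distinct (us @ x # vs) \<Longrightarrow> rank (us @ x # vs) x = length us"
  using rank_nth[of "us @ x # vs" "length us"] by simp

lemma rank_less_length: "distinct l \<Longrightarrow> y \<in> set l \<Longrightarrow> rank l y < length l"
  by (auto simp: in_set_conv_nth rank_nth)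

lemma in_set_drop_iff_rank:
  assumes "distinct l" "y \<in> set l"
  shows "y \<in> set (drop d l) \<longleftrightarrow> d \<le> rank l y"
proof -
  obtain r where r: "r < length l" "l ! r = y"
    using assms(2) by (auto simp: in_set_conv_nth)
  with assms(1) have "rank l y = r"
    using rank_nth by blast
  with assms(1) r show ?thesis
    by (auto simp: in_set_conv_nth nth_eq_iff_index_eq intro: exI[of _ "r - d"])
qed

lemma lowest_iff_rank:
  assumes "distinct l" "y \<in> set l"
  shows "y \<in> lowest l s \<longleftrightarrow> length l - s \<le> rank l y"
  unfolding lowest_def using in_set_drop_iff_rank[OF assms] .

text \<open>The result is the number of entries after the last pick (\<open>0\<close> if the scan
  runs out first).\<close>

fun greedy_tail :: "('a set \<Rightarrow> 'a set) list \<Rightarrow> 'a set \<Rightarrow> 'a list \<Rightarrow> nat" where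
  "greedy_tail Fs Y [] = 0"
| "greedy_tail [] Y (x # xs) = (if x \<in> Y then length xs else greedy_tail [] Y xs)"
| "greedy_tail (F # Fs) Y (x # xs) =
     (if x \<in> Y then greedy_tail Fs (F (Y - {x})) xs else greedy_tail (F # Fs) Y xs)"

lemma greedy_tail_Cons_notin: "x \<notin> Y \<Longrightarrow> greedy_tail Fs Y (x # xs) = greedy_tail Fs Y xs"
  by (cases Fs) simp_all

lemma greedy_tail_append_disjoint:
  "set us \<inter> Y = {} \<Longrightarrow> greedy_tail Fs Y (us @ vs) = greedy_tail Fs Y vs"
  by (induction us) (simp_all add: greedy_tail_Cons_notin)

locale greedy_picks =
  fixes l :: "nat list" and R :: "nat \<Rightarrow> nat set" and F :: "nat set \<Rightarrow> nat set" and k :: nat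
  assumes distinct_l: "distinct l"
    and R_meets: "\<And>j. j \<le> k \<Longrightarrow> R j \<inter> set l \<noteq> {}"
    and R_Suc: "\<And>j. R (Suc j) = F (R j - {first_in l (R j)})"
    and F_subset: "\<And>Y. F Y \<subseteq> Y"
begin

lemma rank_first_in_less:
  assumes "j < k"
  shows "rank l (first_in l (R j)) < rank l (first_in l (R (Suc j)))"
proof -
  define x y where "x = first_in l (R j)" and "y = first_in l (R (Suc j))"
  obtain us vs where l: "l = us @ x # vs" "set us \<inter> R j = {}"
    using split_first_in R_meets assms unfolding x_def by (metis less_imp_le)
  obtain us' vs' where l': "l = us' @ y # vs'" "y \<in> R (Suc j)"
    using split_first_in R_meets assms unfolding y_def by (metis Suc_leI)
  have "R (Suc j) \<subseteq> R j - {x}"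
    using R_Suc F_subset unfolding x_def by simp
  with l'(2) have "y \<in> R j" "y \<noteq> x"
    by auto
  moreover have y_in: "y \<in> set l"
    using l'(1) by simp
  ultimately have "y \<in> set (drop (Suc (length us)) l)"
    using l by auto
  then have "Suc (length us) \<le> rank l y"
    using in_set_drop_iff_rank[OF distinct_l y_in] by blast
  moreover have "rank l x = length us"
    using l(1) distinct_l rank_append_Cons by simp
  ultimately show ?thesis
    unfolding x_def y_def by simp
qed

lemma rank_first_in_mono:
  assumes "j \<le> k"
  shows "rank l (first_in l (R j)) \<le> rank l (first_in l (R k))"
  using assms
proof (induction rule: inc_induct)
  case (step j)
  then show ?case
    using rank_first_in_less[of j] by simp
qed simp

lemma greedy_tail_first_pick:
  assumes "j \<le> k" "set (take p l) \<inter> R j = {}"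
  defines "x \<equiv> first_in l (R j)"
  shows "greedy_tail (G # Gs) (R j) (drop p l) = greedy_tail Gs (G (R j - {x})) (drop (Suc (rank l x)) l)"
    and "greedy_tail [] (R j) (drop p l) = length l - Suc (rank l x)"
    and "set (take (Suc (rank l x)) l) \<inter> (R j - {x}) = {}"
proof -
  obtain us vs where l: "l = us @ x # vs" "set us \<inter> R j = {}" "x \<in> R j"
    using split_first_in R_meets assms unfolding x_def by metis
  have "p \<le> length us"
  proof (rule ccontr)
    assume "\<not> p \<le> length us"
    then have "x \<in> set (take p l)"
      using l(1) by (simp add: take_Cons')
    with assms(2) l(3) show False
      by blast
  qed
  then have drop: "drop p l = drop p us @ x # vs"
    using l(1) by simp
  have "set (drop p us) \<inter> R j = {}"
    using l(2) by (meson disjoint_iff in_set_dropD)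
  then have tail: "greedy_tail Fs (R j) (drop p l) = greedy_tail Fs (R j) (x # vs)" for Fs
    unfolding drop by (rule greedy_tail_append_disjoint)
  have "rank l x = length us"
    using l(1) distinct_l rank_append_Cons by simp
  then have drop_rank: "drop (Suc (rank l x)) l = vs" and take_rank: "take (Suc (rank l x)) l = us @ [x]"
    and length: "length l - Suc (rank l x) = length vs"
    using l(1) by simp_all
  show "greedy_tail (G # Gs) (R j) (drop p l) = greedy_tail Gs (G (R j - {x})) (drop (Suc (rank l x)) l)"
    using tail l(3) by (simp add: drop_rank)
  show "greedy_tail [] (R j) (drop p l) = length l - Suc (rank l x)"
    using tail l(3) by (simp add: length)
  show "set (take (Suc (rank l x)) l) \<inter> (R j - {x}) = {}"
    using l(2) by (auto simp: take_rank)
qed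

lemma greedy_tail_drop:
  assumes "j \<le> k" "set (take p l) \<inter> R j = {}"
  shows "greedy_tail (replicate (k - j) F) (R j) (drop p l) = length l - Suc (rank l (first_in l (R k)))"
  using assms
proof (induction arbitrary: p rule: inc_induct)
  case base
  then show ?case
    using greedy_tail_first_pick(2) by simp
next
  case (step j)
  let ?x = "first_in l (R j)"
  let ?r = "Suc (rank l ?x)"
  have "R (Suc j) \<subseteq> R j - {?x}"
    unfolding R_Suc by (rule F_subset)
  then have IH: "greedy_tail (replicate (k - Suc j) F) (R (Suc j)) (drop ?r l)
      = length l - Suc (rank l (first_in l (R k)))"
    using greedy_tail_first_pick(3)[OF less_imp_le[OF step.hyps(2)] step.prems]
    by (intro step.IH) blast
  have "replicate (k - j) F = F # replicate (k - Suc j) F"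
    using step.hyps(2) by (metis Suc_diff_Suc replicate_Suc)
  then have "greedy_tail (replicate (k - j) F) (R j) (drop p l)
      = greedy_tail (replicate (k - Suc j) F) (F (R j - {?x})) (drop ?r l)"
    using greedy_tail_first_pick(1)[OF less_imp_le[OF step.hyps(2)] step.prems] by (simp only:)
  also have "\<dots> = length l - Suc (rank l (first_in l (R k)))"
    using IH by (simp only: R_Suc)
  finally show ?case .
qed

lemma rank_arg_max_first_in:
  defines "w \<equiv> ARG_MAX (rank l) y. y \<in> (\<lambda>j. first_in l (R j)) ` {..k}"
  shows "w \<in> set l" and "rank l w = rank l (first_in l (R k))"
proof -
  let ?x = "\<lambda>j. first_in l (R j)"
  have "w \<in> ?x ` {..k} \<and> (\<forall>y. y \<in> ?x ` {..k} \<longrightarrow> rank l y \<le> rank l w)"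
    unfolding w_def
    by (rule arg_max_nat_lemma[where k = "?x k" and b = "Suc (rank l (?x k))"])
      (use rank_first_in_mono in \<open>auto simp: less_Suc_eq_le\<close>)
  then obtain j where "j \<le> k" "w = ?x j" "rank l (?x k) \<le> rank l w"
    by auto
  then show "w \<in> set l" "rank l w = rank l (?x k)"
    using first_in_mem[OF R_meets, of j] rank_first_in_mono[of j] by auto
qed

corollary greedy_tail_replicate:
  "greedy_tail (replicate k F) (R 0) l = length l - Suc (rank l (first_in l (R k)))"
  using greedy_tail_drop[of 0 0] by simp

end

section \<open>Counting orderings with a late last pick\<close>

definition shift_ratio_prod :: "nat \<Rightarrow> nat \<Rightarrow> nat \<Rightarrow> real" where
  "shift_ratio_prod a n k = (\<Prod>j\<in>{1..k}. real (a + j * n) / real (j * n))"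

lemma shift_ratio_prod_0 [simp]: "shift_ratio_prod a n 0 = 1"
  by (simp add: shift_ratio_prod_def)

lemma shift_ratio_prod_Suc:
  "shift_ratio_prod a n (Suc k) = shift_ratio_prod a n k * (real (a + Suc k * n) / real (Suc k * n))"
  by (simp add: shift_ratio_prod_def prod.nat_ivl_Suc' algebra_simps)

lemma shift_ratio_prod_ge_1: "n > 0 \<Longrightarrow> shift_ratio_prod a n k \<ge> 1"
  unfolding shift_ratio_prod_def by (rule prod_ge_1) (auto simp: divide_simps)

definition tail_bound :: "nat \<Rightarrow> nat \<Rightarrow> nat \<Rightarrow> nat \<Rightarrow> nat \<Rightarrow> real" where
  "tail_bound s a n k u = real (s choose a) * shift_ratio_prod a n k / real (u choose a) * fact u"

lemma tail_bound_recurrence: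
  assumes "n > 0" "a + k * n \<le> Suc u"
  shows "real (Suc u - (a + k * n)) * tail_bound s a n k u
      + real (a + k * n) * (if k = 0 then 0 else tail_bound s a n (k - 1) u)
    \<le> tail_bound s a n k (Suc u)"
proof (cases "a \<le> u")
  case False
  with assms have "k = 0"
    by (cases k) auto
  with False show ?thesis
    by (simp add: tail_bound_def)
next
  case True
  let ?c = "shift_ratio_prod a n k"
  have shift: "real (a + k * n) * (if k = 0 then 0 else shift_ratio_prod a n (k - 1)) = real (k * n) * ?c"
  proof (cases k)
    case (Suc k')
    have "real n + real k' * real n > 0"
      using assms(1) by (simp add: add_pos_nonneg)
    with Suc show ?thesis
      by (simp add: shift_ratio_prod_Suc field_simps)
  qed simp
  have absorb: "real (Suc u - a) * real (Suc u choose a) = real (Suc u) * real (u choose a)"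
    using binomial_absorb_comp[of "Suc u" a] by (metis diff_Suc_1 of_nat_mult)
  have pos: "real (u choose a) > 0" "real (Suc u choose a) > 0"
    using True by auto
  define K where "K = real (s choose a) * fact u / real (u choose a)"
  have tb: "tail_bound s a n j u = K * shift_ratio_prod a n j" for j
    by (simp add: tail_bound_def K_def)
  have "real (Suc u - (a + k * n)) * tail_bound s a n k u
      + real (a + k * n) * (if k = 0 then 0 else tail_bound s a n (k - 1) u)
    = K * (real (Suc u - (a + k * n)) * ?c
        + real (a + k * n) * (if k = 0 then 0 else shift_ratio_prod a n (k - 1)))"
    by (simp add: tb algebra_simps)
  also have "\<dots> = K * (real (Suc u - (a + k * n)) * ?c + real (k * n) * ?c)"
    by (simp only: shift)
  also have "\<dots> = K * (real (Suc u - a) * ?c)"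
    using assms(2) by (simp add: algebra_simps of_nat_diff)
  also have "\<dots> = real (s choose a) * fact u * ?c * (real (Suc u - a) / real (u choose a))"
    by (simp add: K_def)
  also have "real (Suc u - a) / real (u choose a) = real (Suc u) / real (Suc u choose a)"
    using absorb pos by (simp add: field_simps)
  also have "real (s choose a) * fact u * ?c * (real (Suc u) / real (Suc u choose a))
      = tail_bound s a n k (Suc u)"
    by (simp add: tail_bound_def fact_Suc algebra_simps)
  finally show ?thesis
    by simp
qed

lemma card_permutations_of_set_filter_Cons:
  assumes "finite X" "X \<noteq> {}"
  shows "card {p \<in> permutations_of_set X. Q p} =
    (\<Sum>x\<in>X. card {xs \<in> permutations_of_set (X - {x}). Q (x # xs)})"
proof -
  have "{p \<in> permutations_of_set X. Q p} =
      (\<Union>x\<in>X. (#) x ` {xs \<in> permutations_of_set (X - {x}). Q (x # xs)})"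
    using permutations_of_set_nonempty[OF assms(2)] by auto
  also have "card \<dots> = (\<Sum>x\<in>X. card ((#) x ` {xs \<in> permutations_of_set (X - {x}). Q (x # xs)}))"
    using assms(1) by (intro card_UN_disjoint) auto
  finally show ?thesis
    by (simp add: card_image)
qed

lemma card_permutations_of_set_filter_le:
  assumes "finite X" "X \<noteq> {}" "R \<subseteq> X"
    and "\<And>x. x \<in> X - R \<Longrightarrow> real (card {xs \<in> permutations_of_set (X - {x}). Q (x # xs)}) \<le> A"
    and "\<And>x. x \<in> R \<Longrightarrow> real (card {xs \<in> permutations_of_set (X - {x}). Q (x # xs)}) \<le> B"
  shows "real (card {p \<in> permutations_of_set X. Q p}) \<le> real (card X - card R) * A + real (card R) * B"
proof -
  let ?N = "\<lambda>x. real (card {xs \<in> permutations_of_set (X - {x}). Q (x # xs)})"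
  have "real (card {p \<in> permutations_of_set X. Q p}) = (\<Sum>x\<in>X. ?N x)"
    unfolding card_permutations_of_set_filter_Cons[OF assms(1,2)] of_nat_sum ..
  also have "\<dots> = (\<Sum>x\<in>X - R. ?N x) + (\<Sum>x\<in>R. ?N x)"
    using sum.subset_diff[OF assms(3,1)] by simp
  also have "\<dots> \<le> (\<Sum>x\<in>X - R. A) + (\<Sum>x\<in>R. B)"
    by (intro add_mono sum_mono assms(4,5))
  also have "\<dots> = real (card X - card R) * A + real (card R) * B"
    using card_Diff_subset[OF finite_subset[OF assms(3,1)] assms(3)] by simp
  finally show ?thesis .
qed

lemma card_le_tail_bound:
  assumes "finite X" "card X \<le> s" "a \<le> card X" "n > 0"
  shows "real (card {p \<in> permutations_of_set X. Q p}) \<le> tail_bound s a n k (card X)"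
proof -
  have "card {p \<in> permutations_of_set X. Q p} \<le> card (permutations_of_set X)"
    by (rule card_mono) auto
  then have "real (card {p \<in> permutations_of_set X. Q p}) \<le> real (fact (card X))"
    unfolding card_permutations_of_set[OF assms(1)] by (simp only: of_nat_le_iff)
  also have "\<dots> = 1 * 1 * fact (card X)"
    by simp
  also have "\<dots> \<le> real (s choose a) / real (card X choose a) * shift_ratio_prod a n k * fact (card X)"
  proof (intro mult_right_mono mult_mono)
    have "real (card X choose a) \<le> real (s choose a)" "real (card X choose a) > 0"
      using binomial_right_mono[OF assms(2)] assms(3) by simp_all
    then show "1 \<le> real (s choose a) / real (card X choose a)"
      by simp
  qed (use shift_ratio_prod_ge_1[OF assms(4)] in simp_all)
  finally show ?thesis
    by (simp add: tail_bound_def)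
qed

lemma card_greedy_tail_less:
  fixes F :: "nat set \<Rightarrow> nat set"
  assumes "finite U" and n: "n > 0"
    and F: "\<And>Y. Y \<subseteq> U \<Longrightarrow> n - 1 \<le> card Y \<Longrightarrow> F Y \<subseteq> Y \<and> card (F Y) = card Y - (n - 1)"
  shows "X \<subseteq> U \<Longrightarrow> R \<subseteq> X \<Longrightarrow> card R = a + k * n \<Longrightarrow>
    real (card {p \<in> permutations_of_set X. greedy_tail (replicate k F) R p < s})
      \<le> tail_bound s a n k (card X)"
proof (induction "card X" arbitrary: X R k)
  case 0
  then have "finite X"
    using \<open>finite U\<close> finite_subset by blast
  moreover have "a \<le> card X"
    using 0 card_mono[OF \<open>finite X\<close> \<open>R \<subseteq> X\<close>] by simp
  ultimately have "real (card {p \<in> permutations_of_set X. greedy_tail (replicate k F) R p < s})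
      \<le> tail_bound s a n k (card X)"
    using n 0(1) by (intro card_le_tail_bound) auto
  then show ?case
    by (simp only: 0(1)[symmetric])
next
  case (Suc u)
  note IH = Suc.hyps(1) and card_X = Suc.hyps(2) and X_U = Suc.prems(1) and R_X = Suc.prems(2)
    and card_R = Suc.prems(3)
  have finX: "finite X"
    using X_U \<open>finite U\<close> finite_subset by blast
  have cardR: "a + k * n \<le> Suc u"
    using card_mono[OF finX R_X] card_R card_X by simp
  show ?case
  proof (cases "Suc u \<le> s")
    case True
    then show ?thesis
      using card_le_tail_bound[OF finX] n cardR card_X by simp
  next
    case False
    have card_X_x: "x \<in> X \<Longrightarrow> card (X - {x}) = u" for x
      using finX card_X by simp
    have N_notin: "real (card {xs \<in> permutations_of_set (X - {x}).
        greedy_tail (replicate k F) R (x # xs) < s}) \<le> tail_bound s a n k u" if "x \<in> X - R" for x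
      using IH[of "X - {x}" R k] X_U R_X card_R that card_X_x by (auto simp: greedy_tail_Cons_notin)
    have N_in: "real (card {xs \<in> permutations_of_set (X - {x}).
        greedy_tail (replicate k F) R (x # xs) < s}) \<le> (if k = 0 then 0 else tail_bound s a n (k - 1) u)"
      if "x \<in> R" for x
    proof (cases k)
      case 0
      have "{xs \<in> permutations_of_set (X - {x}). greedy_tail (replicate k F) R (x # xs) < s} = {}"
        using 0 that False card_X_x R_X by (auto dest!: length_finite_permutations_of_set)
      then show ?thesis
        using 0 by simp
    next
      case k: (Suc k')
      have xX: "x \<in> X"
        using that R_X by blast
      have "card (R - {x}) = a + k * n - 1"
        using that finX R_X card_R finite_subset by (simp add: card_Diff_singleton)
      moreover have "R - {x} \<subseteq> U"
        using X_U R_X by blast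
      ultimately have "F (R - {x}) \<subseteq> R - {x}" "card (F (R - {x})) = a + k' * n"
        using F[of "R - {x}"] k n by simp_all
      then have "real (card {xs \<in> permutations_of_set (X - {x}).
          greedy_tail (replicate k' F) (F (R - {x})) xs < s}) \<le> tail_bound s a n k' (card (X - {x}))"
        using X_U R_X by (intro IH card_X_x[OF xX, symmetric]) auto
      then show ?thesis
        using that k card_X_x[OF xX] by simp
    qed
    have "X \<noteq> {}"
      using card_X by auto
    then have "real (card {p \<in> permutations_of_set X. greedy_tail (replicate k F) R p < s})
        \<le> real (card X - card R) * tail_bound s a n k u
          + real (card R) * (if k = 0 then 0 else tail_bound s a n (k - 1) u)"
      by (rule card_permutations_of_set_filter_le[OF finX _ R_X N_notin N_in])
    also have "\<dots> \<le> tail_bound s a n k (Suc u)"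
      using tail_bound_recurrence[OF n cardR] card_X card_R by simp
    finally show ?thesis
      using card_X by simp
  qed
qed

section \<open>Round-Robin seen from one agent\<close>

definition rr_step :: "(nat \<Rightarrow> nat list) \<Rightarrow> nat \<Rightarrow> nat \<Rightarrow> nat set \<Rightarrow> nat set" where
  "rr_step P n k Y = Y - {first_in (P (k mod n + 1)) Y}"

fun rr_steps :: "(nat \<Rightarrow> nat list) \<Rightarrow> nat \<Rightarrow> nat \<Rightarrow> nat \<Rightarrow> nat set \<Rightarrow> nat set" where
  "rr_steps P n k 0 Y = Y"
| "rr_steps P n k (Suc d) Y = rr_steps P n (Suc k) d (rr_step P n k Y)"

lemma rr_remaining_Suc: "rr_remaining P n m (Suc k) = rr_step P n k (rr_remaining P n m k)"
  by (simp add: rr_step_def first_in_def Let_def)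

lemma rr_remaining_add: "rr_remaining P n m (k + d) = rr_steps P n k d (rr_remaining P n m k)"
proof (induction d arbitrary: k)
  case (Suc d)
  have "rr_remaining P n m (k + Suc d) = rr_remaining P n m (Suc k + d)"
    by simp
  also have "\<dots> = rr_steps P n k (Suc d) (rr_remaining P n m k)"
    by (simp only: Suc.IH rr_remaining_Suc rr_steps.simps)
  finally show ?case .
qed simp

lemma rr_steps_add_mult: "rr_steps P n (k + j * n) d Y = rr_steps P n k d Y"
proof (induction d arbitrary: k Y)
  case (Suc d)
  have "rr_step P n (k + j * n) = rr_step P n k"
    by (simp add: rr_step_def fun_eq_iff)
  then show ?case
    using Suc.IH[of "Suc k"] by simp
qed simp

lemma rr_steps_subset: "rr_steps P n k d Y \<subseteq> Y"
  by (induction d arbitrary: k Y) (fastforce simp: rr_step_def)+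

lemma card_rr_steps:
  assumes "\<forall>j\<in>{1..n}. set (P j) = U" "n > 0" "Y \<subseteq> U" "finite Y" "d \<le> card Y"
  shows "card (rr_steps P n k d Y) = card Y - d"
  using assms(3-)
proof (induction d arbitrary: k Y)
  case (Suc d)
  have "set (P (k mod n + 1)) = U"
    using assms(1,2) by (simp add: Suc_leI)
  moreover have "Y \<noteq> {}"
    using Suc.prems by auto
  ultimately have "first_in (P (k mod n + 1)) Y \<in> Y"
    using Suc.prems(1) first_in_mem[of Y "P (k mod n + 1)"] by blast
  then have card_step: "card (rr_step P n k Y) = card Y - 1"
    unfolding rr_step_def using Suc.prems by simp
  moreover have "card (rr_steps P n (Suc k) d (rr_step P n k Y)) = card (rr_step P n k Y) - d"
    using Suc.prems card_step by (intro Suc.IH) (auto simp: rr_step_def)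
  ultimately show ?case
    by simp
qed simp

lemma rr_remaining_subset_card:
  assumes "\<forall>j\<in>{1..n}. set (P j) = {0..<m}" "n > 0" "k \<le> m"
  shows "rr_remaining P n m k \<subseteq> {0..<m}" "card (rr_remaining P n m k) = m - k"
  using rr_remaining_add[of P n m 0 k] rr_steps_subset[of P n 0 k "{0..<m}"]
    card_rr_steps[OF assms(1,2), of "{0..<m}" k 0] assms(3) by simp_all

lemma rr_steps_cong:
  assumes "\<forall>k'. k \<le> k' \<and> k' < k + d \<longrightarrow> P (k' mod n + 1) = P' (k' mod n + 1)"
  shows "rr_steps P n k d Y = rr_steps P' n k d Y"
  using assms
proof (induction d arbitrary: k Y)
  case (Suc d)
  then have "rr_step P n k Y = rr_step P' n k Y"
    by (simp add: rr_step_def)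
  with Suc show ?case
    by simp
qed simp

lemma rr_remaining_cong:
  assumes "\<forall>k'<k. P (k' mod n + 1) = P' (k' mod n + 1)"
  shows "rr_remaining P n m k = rr_remaining P' n m k"
  using rr_remaining_add[of _ n m 0 k] rr_steps_cong[of 0 k P n P'] assms by simp

lemma rr_turn_mod:
  fixes i n j :: nat
  assumes "1 \<le> i" "i \<le> n"
  shows "(j * n + (i - 1)) mod n + 1 = i"
proof -
  have "(j * n + (i - 1)) mod n = (i - 1) mod n"
    by simp
  with assms show ?thesis
    by simp
qed

lemma rr_bundle_eq_image:
  assumes "1 \<le> i" "i \<le> n" "m = q * n"
  shows "rr_bundle P n m i = (\<lambda>j. rr_pick P n m (j * n + (i - 1))) ` {..<q}"
proof (intro set_eqI iffI)
  fix y assume "y \<in> rr_bundle P n m i"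
  then obtain k where k: "k < m" "k mod n + 1 = i" "y = rr_pick P n m k"
    unfolding rr_bundle_def by blast
  have "y = rr_pick P n m k"
    by (rule k(3))
  also have "k = k div n * n + (i - 1)"
    using k(2) by (metis add_diff_cancel_right' div_mult_mod_eq)
  finally have "y = rr_pick P n m (k div n * n + (i - 1))" .
  moreover have "k div n < q"
    using k(1) assms by (simp add: div_less_iff_less_mult)
  ultimately show "y \<in> (\<lambda>j. rr_pick P n m (j * n + (i - 1))) ` {..<q}"
    by blast
next
  fix y assume "y \<in> (\<lambda>j. rr_pick P n m (j * n + (i - 1))) ` {..<q}"
  then obtain j where "j < q" "y = rr_pick P n m (j * n + (i - 1))"
    by blast
  moreover have "j * n + (i - 1) < m"
  proof -
    have "Suc j * n \<le> q * n"
      using \<open>j < q\<close> by (intro mult_le_mono1) simp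
    with assms show ?thesis
      by simp
  qed
  ultimately show "y \<in> rr_bundle P n m i"
    unfolding rr_bundle_def using rr_turn_mod[OF assms(1,2)] by blast
qed

lemma rr_remaining_next_turn:
  fixes j :: nat
  assumes "1 \<le> i" "i \<le> n"
  defines "t \<equiv> j * n + (i - 1)"
  shows "rr_remaining P n m (Suc j * n + (i - 1))
    = rr_steps P n i (n - 1) (rr_remaining P n m t - {rr_pick P n m t})"
proof -
  have "rr_remaining P n m (Suc j * n + (i - 1)) = rr_steps P n t n (rr_remaining P n m t)"
    unfolding t_def by (simp flip: rr_remaining_add add: add.commute add.left_commute)
  also have "\<dots> = rr_steps P n (Suc t) (n - 1) (rr_step P n t (rr_remaining P n m t))"
    using assms by (cases n) simp_all
  also have "rr_step P n t (rr_remaining P n m t) = rr_remaining P n m t - {rr_pick P n m t}"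
    by (simp add: rr_step_def rr_pick_def first_in_def)
  also have "rr_steps P n (Suc t) (n - 1) = rr_steps P n i (n - 1)"
    using rr_steps_add_mult[of P n i j] assms unfolding t_def by (simp add: fun_eq_iff add.commute)
  finally show ?thesis .
qed

lemma rr_worst_in_lowest_iff:
  fixes P :: "nat \<Rightarrow> nat list"
  assumes i: "1 \<le> i" "i \<le> n" and m: "m = q * n" and "q > 0"
    and prof: "\<forall>j\<in>{1..n}. set (P j) = {0..<m}" and dist: "distinct (P i)"
  shows "rr_worst P n m i \<in> lowest (P i) s \<longleftrightarrow>
    greedy_tail (replicate (q - 1) (rr_steps P n i (n - 1))) (rr_remaining P n m (i - 1)) (P i) < s"
proof -
  define R where "R j = rr_remaining P n m (j * n + (i - 1))" for j
  define x where "x j = first_in (P i) (R j)" for j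
  have pick: "rr_pick P n m (j * n + (i - 1)) = x j" for j
    unfolding rr_pick_def x_def first_in_def R_def rr_turn_mod[OF i] ..
  have set_l: "set (P i) = {0..<m}" and len: "length (P i) = m"
    using prof i dist distinct_card[OF dist] by auto
  interpret greedy_picks "P i" R "rr_steps P n i (n - 1)" "q - 1"
  proof
    fix j assume "j \<le> q - 1"
    then have "Suc j * n \<le> q * n"
      using \<open>q > 0\<close> by (intro mult_le_mono1) simp
    then have "j * n + (i - 1) < m"
      using i m by simp
    then have "R j \<subseteq> {0..<m}" "card (R j) > 0"
      unfolding R_def using rr_remaining_subset_card[OF prof] i by simp_all
    then show "R j \<inter> set (P i) \<noteq> {}"
      using set_l by (auto simp: card_gt_0_iff)
  next
    fix j
    show "R (Suc j) = rr_steps P n i (n - 1) (R j - {first_in (P i) (R j)})"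
      by (simp only: R_def rr_remaining_next_turn[OF i] pick x_def)
  qed (simp_all add: dist rr_steps_subset)
  have "{..<q} = {..q - 1}"
    using \<open>q > 0\<close> by auto
  then have "rr_worst P n m i = (ARG_MAX (rank (P i)) y. y \<in> x ` {..q - 1})"
    unfolding rr_worst_def by (simp only: rr_bundle_eq_image[OF i m] pick)
  then have worst_in: "rr_worst P n m i \<in> set (P i)"
    and rank_worst: "rank (P i) (rr_worst P n m i) = rank (P i) (x (q - 1))"
    using rank_arg_max_first_in unfolding x_def by simp_all
  have "R 0 = rr_remaining P n m (i - 1)"
    by (simp add: R_def)
  then have tail: "greedy_tail (replicate (q - 1) (rr_steps P n i (n - 1))) (rr_remaining P n m (i - 1)) (P i)
      = m - Suc (rank (P i) (rr_worst P n m i))"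
    using greedy_tail_replicate unfolding rank_worst len x_def by simp
  have "rank (P i) (rr_worst P n m i) < m"
    using rank_less_length[OF dist worst_in] len by simp
  then show ?thesis
    unfolding lowest_iff_rank[OF dist worst_in] tail len by arith
qed

lemma rr_not_turn:
  fixes i n k :: nat
  assumes "1 \<le> i" "i \<le> n" "i \<le> k" "k < i + (n - 1)"
  shows "k mod n + 1 \<noteq> i"
proof (cases "k < n")
  case False
  then have "k mod n = k - n"
    using assms by (simp add: le_mod_geq)
  with assms False show ?thesis
    by simp
qed (use assms in simp)

lemma card_rr_worst_in_lowest:
  fixes g :: "nat \<Rightarrow> nat list"
  assumes i: "1 \<le> i" "i \<le> n" and m: "m = q * n" and "q > 0"
    and g: "g \<in> Pi\<^sub>E ({1..n} - {i}) (\<lambda>_. permutations_of_set {0..<m})"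
  shows "real (card {p \<in> permutations_of_set {0..<m}. rr_worst (g(i := p)) n m i \<in> lowest p s})
    \<le> tail_bound s (n + 1 - i) n (q - 1) m"
proof -
  define P0 where "P0 = g(i := [0..<m])"
  define F where "F = rr_steps P0 n i (n - 1)"
  define R0 where "R0 = rr_remaining P0 n m (i - 1)"
  have n: "n > 0"
    using i by simp
  have prof: "\<forall>j\<in>{1..n}. set ((g(i := p)) j) = {0..<m}" if "p \<in> permutations_of_set {0..<m}" for p
    using that g by (auto simp: PiE_iff permutations_of_setD)
  have prof0: "\<forall>j\<in>{1..n}. set (P0 j) = {0..<m}"
    unfolding P0_def by (rule prof) (auto intro: permutations_of_setI)
  have worst_iff: "rr_worst (g(i := p)) n m i \<in> lowest p s \<longleftrightarrow> greedy_tail (replicate (q - 1) F) R0 p < s"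
    if p: "p \<in> permutations_of_set {0..<m}" for p
  proof -
    have "distinct ((g(i := p)) i)"
      using p by (simp add: permutations_of_setD)
    moreover have "rr_steps (g(i := p)) n i (n - 1) = F"
      unfolding F_def P0_def
      by (intro ext rr_steps_cong) (use rr_not_turn[OF i] in auto)
    moreover have "rr_remaining (g(i := p)) n m (i - 1) = R0"
      unfolding R0_def P0_def by (rule rr_remaining_cong) (use i in auto)
    ultimately show ?thesis
      using rr_worst_in_lowest_iff[OF i m \<open>q > 0\<close> prof[OF p], of s] by (simp only: fun_upd_same)
  qed
  have F: "F Y \<subseteq> Y \<and> card (F Y) = card Y - (n - 1)" if "Y \<subseteq> {0..<m}" "n - 1 \<le> card Y" for Y
    unfolding F_def using rr_steps_subset card_rr_steps[OF prof0 n] that finite_subset by blast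
  have "n \<le> m"
    using m \<open>q > 0\<close> by simp
  then have "i - 1 \<le> m"
    using i by linarith
  then have "R0 \<subseteq> {0..<m}" "card R0 = m - (i - 1)"
    unfolding R0_def using rr_remaining_subset_card[OF prof0 n] by auto
  moreover have "m - (i - 1) = (n + 1 - i) + (q - 1) * n"
    using i m \<open>q > 0\<close> by (simp add: diff_mult_distrib)
  ultimately have "real (card {p \<in> permutations_of_set {0..<m}. greedy_tail (replicate (q - 1) F) R0 p < s})
      \<le> tail_bound s (n + 1 - i) n (q - 1) m"
    using card_greedy_tail_less[of "{0..<m}" n F "{0..<m}" R0 "n + 1 - i" "q - 1" s] F n by simp
  moreover have "{p \<in> permutations_of_set {0..<m}. rr_worst (g(i := p)) n m i \<in> lowest p s}
      = {p \<in> permutations_of_set {0..<m}. greedy_tail (replicate (q - 1) F) R0 p < s}"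
    using worst_iff by blast
  ultimately show ?thesis
    by simp
qed

section \<open>Conditioning on the other agents\<close>

lemma prob_pmf_of_set_PiE_le:
  fixes T :: "'a \<Rightarrow> 'b set"
  assumes "finite S" "i \<in> S" "\<And>j. j \<in> S \<Longrightarrow> finite (T j) \<and> T j \<noteq> {}"
    and bound: "\<And>g. g \<in> Pi\<^sub>E (S - {i}) T \<Longrightarrow> real (card {y \<in> T i. Q (g(i := y))}) \<le> b * real (card (T i))"
  shows "measure_pmf.prob (pmf_of_set (Pi\<^sub>E S T)) {P. Q P} \<le> b"
proof -
  define G where "G = Pi\<^sub>E (S - {i}) T"
  define upd :: "'b \<times> ('a \<Rightarrow> 'b) \<Rightarrow> 'a \<Rightarrow> 'b" where "upd = (\<lambda>(y, g). g(i := y))"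
  have fin_G: "finite G"
    unfolding G_def using assms(1,3) by (intro finite_PiE) auto
  have PiE_eq: "Pi\<^sub>E S T = upd ` (T i \<times> G)"
    unfolding upd_def G_def using PiE_insert_eq[of i "S - {i}" T] insert_Diff[OF assms(2)] by simp
  have inj: "inj_on upd (T i \<times> G)"
    unfolding upd_def G_def by (rule inj_combinator) simp
  have filter_eq: "Pi\<^sub>E S T \<inter> {P. Q P} = upd ` {(y, g) \<in> T i \<times> G. Q (g(i := y))}"
    unfolding PiE_eq upd_def by auto
  have "{(y, g) \<in> T i \<times> G. Q (g(i := y))} \<subseteq> T i \<times> G"
    by auto
  then have "card (Pi\<^sub>E S T \<inter> {P. Q P}) = card {(y, g) \<in> T i \<times> G. Q (g(i := y))}"
    unfolding filter_eq by (intro card_image inj_on_subset[OF inj])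
  also have "{(y, g) \<in> T i \<times> G. Q (g(i := y))} = prod.swap ` (SIGMA g:G. {y \<in> T i. Q (g(i := y))})"
    by force
  also have "card \<dots> = card (SIGMA g:G. {y \<in> T i. Q (g(i := y))})"
    by (rule card_image) (simp add: inj_on_def)
  also have "\<dots> = (\<Sum>g\<in>G. card {y \<in> T i. Q (g(i := y))})"
    using fin_G assms(2,3) by (intro card_SigmaI) auto
  finally have "real (card (Pi\<^sub>E S T \<inter> {P. Q P})) = (\<Sum>g\<in>G. real (card {y \<in> T i. Q (g(i := y))}))"
    by simp
  also have "\<dots> \<le> (\<Sum>g\<in>G. b * real (card (T i)))"
    unfolding G_def by (intro sum_mono bound)
  also have "\<dots> = b * real (card (Pi\<^sub>E S T))"
    unfolding PiE_eq card_image[OF inj] card_cartesian_product by simp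
  finally have le: "real (card (Pi\<^sub>E S T \<inter> {P. Q P})) \<le> b * real (card (Pi\<^sub>E S T))" .
  have "Pi\<^sub>E S T \<noteq> {}" "finite (Pi\<^sub>E S T)"
    using assms(1,3) by (auto simp: PiE_eq_empty_iff intro: finite_PiE)
  then show ?thesis
    using le by (simp add: measure_pmf_of_set pos_divide_le_eq card_gt_0_iff)
qed

lemma harm_le_1_plus_ln: "k > 0 \<Longrightarrow> harm k \<le> 1 + ln (real k)"
  using decseq_harm_diff_ln[unfolded decseq_def, rule_format, of 0 "k - 1"]
  by (simp add: harm_Suc harm_def[of 0])

lemma shift_ratio_prod_le_exp_harm:
  assumes "n > 0"
  shows "shift_ratio_prod a n k \<le> exp (real a / real n * harm k)"
proof -
  have "shift_ratio_prod a n k = (\<Prod>j\<in>{1..k}. 1 + real a / real n * (1 / real j))"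
    unfolding shift_ratio_prod_def using assms by (intro prod.cong) (auto simp: field_simps)
  also have "\<dots> \<le> (\<Prod>j\<in>{1..k}. exp (real a / real n * (1 / real j)))"
    by (intro prod_mono) (auto simp: add_nonneg_nonneg)
  also have "\<dots> = exp (real a / real n * harm k)"
    by (simp add: exp_sum harm_def sum_distrib_left divide_inverse)
  finally show ?thesis .
qed

lemma shift_ratio_prod_le_powr:
  assumes "n \<ge> 2" "0 < k" "k \<le> M"
  shows "shift_ratio_prod a n k \<le> (2 * real M powr (1 / real n)) ^ a"
proof -
  have "shift_ratio_prod a n k \<le> exp (real a / real n * harm k)"
    using assms(1) by (intro shift_ratio_prod_le_exp_harm) simp
  also have "\<dots> \<le> exp (real a / real n * (1 + ln (real k)))"
    unfolding exp_le_cancel_iff using harm_le_1_plus_ln[OF assms(2)] by (intro mult_left_mono) auto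
  also have "\<dots> = exp ((1 + ln (real k)) / real n) ^ a"
    by (simp add: field_simps flip: exp_of_nat_mult)
  also have "exp ((1 + ln (real k)) / real n) = exp (1 / real n) * real k powr (1 / real n)"
    using assms(2) by (simp add: powr_def add_divide_distrib flip: exp_add)
  also have "\<dots> \<le> 2 * real M powr (1 / real n)"
  proof (rule mult_mono)
    have "exp (1 / real n) \<le> exp (1 / 2)"
      using assms(1) by (simp add: divide_simps)
    then show "exp (1 / real n) \<le> 2"
      using exp_half_le2 by linarith
    show "real k powr (1 / real n) \<le> real M powr (1 / real n)"
      using assms by (intro powr_mono2) auto
  qed auto
  then have "(exp (1 / real n) * real k powr (1 / real n)) ^ a \<le> (2 * real M powr (1 / real n)) ^ a"
    by (rule power_mono) simp
  finally show ?thesis .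
qed

lemma binomial_ratio_le_power:
  "s \<le> m \<Longrightarrow> real (s choose a) / real (m choose a) \<le> (real s / real m) ^ a"
proof (induction a arbitrary: s m)
  case (Suc a)
  show ?case
  proof (cases "s = 0")
    case False
    with Suc.prems have "s \<ge> 1" "m \<ge> 1"
      by auto
    have absorb: "real (x choose Suc a) = real x * real ((x - 1) choose a) / real (Suc a)" for x
      using binomial_absorption[of a x] by (simp add: field_simps flip: of_nat_mult)
    have cancel: "(x / c) / (y / c) = x / y" if "c \<noteq> 0" for x y c :: real
      using that by (cases "y = 0") simp_all
    have "real (s - 1) / real (m - 1) \<le> real s / real m"
      using Suc.prems \<open>s \<ge> 1\<close> \<open>m \<ge> 1\<close> by (cases "m = 1") (auto simp: of_nat_diff field_simps)
    then have "(real (s - 1) / real (m - 1)) ^ a \<le> (real s / real m) ^ a"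
      by (rule power_mono) simp
    with Suc.IH[OF diff_le_mono[OF Suc.prems]]
    have "real ((s - 1) choose a) / real ((m - 1) choose a) \<le> (real s / real m) ^ a"
      by (rule order_trans)
    then have "real s / real m * (real ((s - 1) choose a) / real ((m - 1) choose a))
        \<le> real s / real m * (real s / real m) ^ a"
      by (rule mult_left_mono) simp
    then show ?thesis
      unfolding absorb cancel[OF of_nat_neq_0] by simp
  qed simp
qed simp

lemma lowest_size_bounds:
  fixes n m :: nat
  assumes n: "n \<ge> 2" and m: "m \<ge> 2 * n"
    and small: "real n * ln (real m) / real m powr (1 - 1 / real n) \<le> 1 / 16"
  defines "s \<equiv> nat \<lceil>3 * real n * ln (real m)\<rceil> + (n - 1)"
  shows "s \<le> m" and "2 * real s \<le> 8 * real n * ln (real m)"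
proof -
  have "real m \<ge> 4"
    using n m by simp
  then have ln_ge_1: "1 \<le> ln (real m)"
    using exp_le by (smt (verit) ln_ge_iff)
  have "real s \<le> 3 * real n * ln (real m) + real n"
  proof -
    have "real (nat \<lceil>3 * real n * ln (real m)\<rceil>) = of_int \<lceil>3 * real n * ln (real m)\<rceil>"
      using ln_ge_1 by (simp add: ceiling_le_zero not_le)
    also have "\<dots> \<le> 3 * real n * ln (real m) + 1"
      by (rule of_int_ceiling_le_add_one)
    finally have "real (nat \<lceil>3 * real n * ln (real m)\<rceil>) \<le> 3 * real n * ln (real m) + 1" .
    then show ?thesis
      unfolding s_def using n by (simp add: of_nat_diff)
  qed
  moreover have "real n \<le> real n * ln (real m)"
    using mult_left_mono[OF ln_ge_1, of "real n"] by simp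
  ultimately show "2 * real s \<le> 8 * real n * ln (real m)"
    by simp
  have "real m powr (1 - 1 / real n) \<le> real m powr 1"
    using \<open>real m \<ge> 4\<close> by (intro powr_mono) auto
  with small have "real n * ln (real m) \<le> real m / 16"
    using \<open>real m \<ge> 4\<close> by (simp add: divide_simps)
  with \<open>real s \<le> 3 * real n * ln (real m) + real n\<close> m show "s \<le> m"
    by simp
qed

lemma tail_bound_le_power:
  fixes n m q s a :: nat
  assumes n: "n \<ge> 2" and m: "m = q * n" "m \<ge> 2 * n" and "s \<le> m"
    and s: "2 * real s \<le> 8 * real n * ln (real m)"
  shows "tail_bound s a n (q - 1) m / fact m \<le> (8 * real n * ln (real m) / real m powr (1 - 1 / real n)) ^ a"
proof -
  have "real m > 0"
    using m n by simp
  have "q \<ge> 2"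
    using m n by (simp add: mult_le_cancel2)
  moreover have "q \<le> m"
    using m n by simp
  ultimately have "q - 1 > 0" "q - 1 \<le> m"
    by simp_all
  then have "shift_ratio_prod a n (q - 1) \<le> (2 * real m powr (1 / real n)) ^ a"
    using n by (intro shift_ratio_prod_le_powr)
  moreover have "real (s choose a) / real (m choose a) \<le> (real s / real m) ^ a"
    using \<open>s \<le> m\<close> by (rule binomial_ratio_le_power)
  moreover have "shift_ratio_prod a n (q - 1) \<ge> 1"
    using n by (intro shift_ratio_prod_ge_1) simp
  ultimately have "real (s choose a) / real (m choose a) * shift_ratio_prod a n (q - 1)
      \<le> (real s / real m) ^ a * (2 * real m powr (1 / real n)) ^ a"
    by (intro mult_mono) auto
  then have "tail_bound s a n (q - 1) m / fact m \<le> (real s / real m) ^ a * (2 * real m powr (1 / real n)) ^ a"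
    by (simp add: tail_bound_def)
  also have "\<dots> = (real s / real m * (2 * real m powr (1 / real n))) ^ a"
    by (simp only: power_mult_distrib)
  also have "real s / real m * (2 * real m powr (1 / real n)) = 2 * real s / real m powr (1 - 1 / real n)"
    using \<open>real m > 0\<close> by (simp add: powr_diff)
  also have "(2 * real s / real m powr (1 - 1 / real n)) ^ a
      \<le> (8 * real n * ln (real m) / real m powr (1 - 1 / real n)) ^ a"
    using s by (intro power_mono divide_right_mono) auto
  finally show ?thesis .
qed

theorem claim4p9:
  fixes n m q i :: nat
  assumes "n \<ge> 2" and "q > 0" and "m = q * n" and "m \<ge> 2 * n"
    and "real n * ln (real m) / real m powr (1 - 1 / real n) \<le> 1 / 16"
    and "1 \<le> i" and "i \<le> n"
  shows "measure_pmf.prob (pmf_of_set (profiles n m))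
           {P. rr_worst P n m i \<in> lowest (P i) (nat \<lceil>3 * real n * ln (real m)\<rceil> + (n - 1))}
         \<le> 2 * (8 * real n * ln (real m) / real m powr (1 - 1 / real n)) ^ (n + 1 - i)"
proof -
  define s where "s = nat \<lceil>3 * real n * ln (real m)\<rceil> + (n - 1)"
  define b where "b = tail_bound s (n + 1 - i) n (q - 1) m / fact m"
  have "measure_pmf.prob (pmf_of_set (profiles n m)) {P. rr_worst P n m i \<in> lowest (P i) s} \<le> b"
    unfolding profiles_def
  proof (rule prob_pmf_of_set_PiE_le)
    fix g assume "g \<in> Pi\<^sub>E ({1..n} - {i}) (\<lambda>_. permutations_of_set {0..<m})"
    with assms card_rr_worst_in_lowest[of i n m q g s]
    show "real (card {p \<in> permutations_of_set {0..<m}. rr_worst (g(i := p)) n m i \<in> lowest ((g(i := p)) i) s})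
        \<le> b * real (card (permutations_of_set {0..<m}))"
      by (simp add: b_def)
  qed (use assms in \<open>auto intro: permutations_of_setI\<close>)
  also have "b \<le> (8 * real n * ln (real m) / real m powr (1 - 1 / real n)) ^ (n + 1 - i)"
    unfolding b_def s_def using assms lowest_size_bounds[of n m] by (intro tail_bound_le_power) auto
  also have "\<dots> \<le> 2 * (8 * real n * ln (real m) / real m powr (1 - 1 / real n)) ^ (n + 1 - i)"
  proof -
    have "1 \<le> real m"
      using assms(1,4) by simp
    then show ?thesis
      by simp
  qed
  finally show ?thesis
    unfolding s_def .
qed

end
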